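(* For a category $\mathbb{X}$ with finite products, $\overline{\mathcal{D}}[\mathbb{X}]$ is a category, i.e. composition $\ast$ of pre-$\mathsf{D}$-sequences is associative and $i_\bullet$ is a two-sided unit.
   Context: Composition in diagrammatic order. $\mathsf{P}(A)=A\times A$, $\mathsf{P}(f)=f\times f$. A pre-$\mathsf{D}$-sequence $f_\bullet:A\to B$ is $(f_0,f_1,\dots)$ with $f_n:\mathsf{P}^n(A)\to B$. The tangent $\mathsf{T}(f_\bullet):\mathsf{P}(A)\to\mathsf{P}(B)$ is the pre-$\mathsf{D}$-sequence $\mathsf{T}(f_\bullet)_n=\langle\mathsf{P}^n(\pi_0)f_n,f_{n+1}\rangle$, with $\pi_0:\mathsf{P}(A)\to A$; $\mathsf{T}^n$ is its $n$-fold iterate, so $\mathsf{T}^n(f_\bullet)_0:\mathsf{P}^n(A)\to\mathsf{P}^n(B)$. $\overline{\mathcal{D}}[\mathbb{X}]$ has the objects of $\mathbb{X}$, pre-$\mathsf{D}$-sequences as maps, identity $i_\bullet:A\to A$ with $i_0=1_A$, $i_n=\pi_1\pi_1\cdots\pi_1:\mathsf{P}^n(A)\to A$ ($n$ projections), and composition $(f_\bullet\ast g_\bullet)_n=\mathsf{T}^n(f_\bullet)_0\,g_n$. *)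

theory Defs
  imports Main
begin

text \<open>A category with chosen finite products (binary products and a terminal object).
Composition is written in diagrammatic order: cmp f g means first f, then g.\<close>

record ('o, 'a) cartcat =
  Obj :: "'o set"
  Arr :: "'a set"
  dom :: "'a \<Rightarrow> 'o"
  cod :: "'a \<Rightarrow> 'o"
  cmp :: "'a \<Rightarrow> 'a \<Rightarrow> 'a"
  idn :: "'o \<Rightarrow> 'a"
  prd :: "'o \<Rightarrow> 'o \<Rightarrow> 'o"
  pr0 :: "'o \<Rightarrow> 'o \<Rightarrow> 'a"
  pr1 :: "'o \<Rightarrow> 'o \<Rightarrow> 'a"
  pair :: "'a \<Rightarrow> 'a \<Rightarrow> 'a"
  trm :: "'o"
  bang :: "'o \<Rightarrow> 'a"

definition Hom :: "('o, 'a, 'z) cartcat_scheme \<Rightarrow> 'o \<Rightarrow> 'o \<Rightarrow> 'a set" where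
  "Hom C a b = {f \<in> Arr C. dom C f = a \<and> cod C f = b}"

definition is_category :: "('o, 'a, 'z) cartcat_scheme \<Rightarrow> bool" where
  "is_category C \<longleftrightarrow>
     (\<forall>f \<in> Arr C. dom C f \<in> Obj C \<and> cod C f \<in> Obj C) \<and>
     (\<forall>f \<in> Arr C. \<forall>g \<in> Arr C. cod C f = dom C g \<longrightarrow>
        cmp C f g \<in> Arr C \<and> dom C (cmp C f g) = dom C f \<and> cod C (cmp C f g) = cod C g) \<and>
     (\<forall>f \<in> Arr C. \<forall>g \<in> Arr C. \<forall>h \<in> Arr C. cod C f = dom C g \<longrightarrow> cod C g = dom C h \<longrightarrow>
        cmp C (cmp C f g) h = cmp C f (cmp C g h)) \<and>
     (\<forall>a \<in> Obj C. idn C a \<in> Hom C a a) \<and>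
     (\<forall>f \<in> Arr C. cmp C (idn C (dom C f)) f = f \<and> cmp C f (idn C (cod C f)) = f)"

definition has_finite_products :: "('o, 'a, 'z) cartcat_scheme \<Rightarrow> bool" where
  "has_finite_products C \<longleftrightarrow>
     trm C \<in> Obj C \<and>
     (\<forall>a \<in> Obj C. bang C a \<in> Hom C a (trm C) \<and> (\<forall>h \<in> Hom C a (trm C). h = bang C a)) \<and>
     (\<forall>a \<in> Obj C. \<forall>b \<in> Obj C.
        prd C a b \<in> Obj C \<and> pr0 C a b \<in> Hom C (prd C a b) a \<and> pr1 C a b \<in> Hom C (prd C a b) b \<and>
        (\<forall>c \<in> Obj C. \<forall>f \<in> Hom C c a. \<forall>g \<in> Hom C c b.
           pair C f g \<in> Hom C c (prd C a b) \<and>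
           cmp C (pair C f g) (pr0 C a b) = f \<and> cmp C (pair C f g) (pr1 C a b) = g) \<and>
        (\<forall>c \<in> Obj C. \<forall>h \<in> Hom C c (prd C a b).
           h = pair C (cmp C h (pr0 C a b)) (cmp C h (pr1 C a b))))"

definition cartesian_category :: "('o, 'a, 'z) cartcat_scheme \<Rightarrow> bool" where
  "cartesian_category C \<longleftrightarrow> is_category C \<and> has_finite_products C"

definition Pob :: "('o, 'a, 'z) cartcat_scheme \<Rightarrow> 'o \<Rightarrow> 'o" where
  "Pob C a = prd C a a"

definition Parr :: "('o, 'a, 'z) cartcat_scheme \<Rightarrow> 'a \<Rightarrow> 'a" where
  "Parr C f = pair C (cmp C (pr0 C (dom C f) (dom C f)) f) (cmp C (pr1 C (dom C f) (dom C f)) f)"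

definition preD_seq :: "('o, 'a, 'z) cartcat_scheme \<Rightarrow> 'o \<Rightarrow> 'o \<Rightarrow> (nat \<Rightarrow> 'a) \<Rightarrow> bool" where
  "preD_seq C a b f \<longleftrightarrow> (\<forall>n. f n \<in> Hom C ((Pob C ^^ n) a) b)"

definition Tan :: "('o, 'a, 'z) cartcat_scheme \<Rightarrow> 'o \<Rightarrow> (nat \<Rightarrow> 'a) \<Rightarrow> (nat \<Rightarrow> 'a)" where
  "Tan C a f = (\<lambda>n. pair C (cmp C ((Parr C ^^ n) (pr0 C a a)) (f n)) (f (Suc n)))"

fun Tan_iter :: "('o, 'a, 'z) cartcat_scheme \<Rightarrow> nat \<Rightarrow> 'o \<Rightarrow> (nat \<Rightarrow> 'a) \<Rightarrow> (nat \<Rightarrow> 'a)" where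
  "Tan_iter C 0 a f = f"
| "Tan_iter C (Suc k) a f = Tan C ((Pob C ^^ k) a) (Tan_iter C k a f)"

definition Dcomp :: "('o, 'a, 'z) cartcat_scheme \<Rightarrow> 'o \<Rightarrow> (nat \<Rightarrow> 'a) \<Rightarrow> (nat \<Rightarrow> 'a) \<Rightarrow> (nat \<Rightarrow> 'a)" where
  "Dcomp C a f g = (\<lambda>n. cmp C (Tan_iter C n a f 0) (g n))"

fun Did :: "('o, 'a, 'z) cartcat_scheme \<Rightarrow> 'o \<Rightarrow> nat \<Rightarrow> 'a" where
  "Did C a 0 = idn C a"
| "Did C a (Suc 0) = pr1 C a a"
| "Did C a (Suc (Suc n)) =
     cmp C (pr1 C ((Pob C ^^ Suc n) a) ((Pob C ^^ Suc n) a)) (Did C a (Suc n))"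

end

theory Submission
  imports Defs
begin

text \<open>
  The tangent T commutes with reindexing a pre-D-sequence along a map on either side:
  with u f := (P^n(u) f_n)_n and f v := (f_n v)_n one has T(u f) = P(u) T(f) and T(f v) = T(f) P(v).
  As T(f) followed by pi_0 is pi_0 f, pushing this through T^n gives
  T^(n+1)(f)_0 P^n(pi_0) = P^n(pi_0) T^n(f)_0, which is exactly what makes T a functor:
  T(f * g) = T(f) * T(g). Hence ((f * g) * h)_n = T^n(f)_0 T^n(g)_0 h_n = (f * (g * h))_n
  by associativity in X. For the units, T(i) = i by the universal property of P(A), so
  (i * f)_n = f_n; and since composing with pi_1 selects the second component of a tangent,
  T^k(f)_j i_k = f_(j+k), which gives f * i = f.
\<close>

locale cartesian_cat =
  fixes C :: "('o, 'a, 'z) cartcat_scheme"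
  assumes cartesian: "cartesian_category C"
begin

lemma is_category: "is_category C" and has_finite_products: "has_finite_products C"
  using cartesian by (auto simp: cartesian_category_def)

lemma dom_obj: "f \<in> Hom C a b \<Longrightarrow> a \<in> Obj C"
  and cod_obj: "f \<in> Hom C a b \<Longrightarrow> b \<in> Obj C"
  using is_category by (auto simp: is_category_def Hom_def)

lemma comp_in_hom [intro]: "f \<in> Hom C a b \<Longrightarrow> g \<in> Hom C b c \<Longrightarrow> cmp C f g \<in> Hom C a c"
  using is_category by (auto simp: is_category_def Hom_def)

lemma comp_assoc:
  "f \<in> Hom C a b \<Longrightarrow> g \<in> Hom C b c \<Longrightarrow> h \<in> Hom C c d \<Longrightarrow>
   cmp C (cmp C f g) h = cmp C f (cmp C g h)"
proof -
  assume "f \<in> Hom C a b" "g \<in> Hom C b c" "h \<in> Hom C c d"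
  then have "f \<in> Arr C" "g \<in> Arr C" "h \<in> Arr C" "cod C f = dom C g" "cod C g = dom C h"
    by (auto simp: Hom_def)
  moreover have "\<forall>f \<in> Arr C. \<forall>g \<in> Arr C. \<forall>h \<in> Arr C. cod C f = dom C g \<longrightarrow> cod C g = dom C h \<longrightarrow>
      cmp C (cmp C f g) h = cmp C f (cmp C g h)"
    using is_category unfolding is_category_def by (elim conjE)
  ultimately show ?thesis
    by blast
qed

lemma idn_in_hom [intro]: "a \<in> Obj C \<Longrightarrow> idn C a \<in> Hom C a a"
  using is_category by (auto simp: is_category_def)

lemma comp_idn_left: "f \<in> Hom C a b \<Longrightarrow> cmp C (idn C a) f = f"
  and comp_idn_right: "f \<in> Hom C a b \<Longrightarrow> cmp C f (idn C b) = f"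
  using is_category by (auto simp: is_category_def Hom_def)

lemma prd_obj [intro]: "a \<in> Obj C \<Longrightarrow> b \<in> Obj C \<Longrightarrow> prd C a b \<in> Obj C"
  and pr0_in_hom [intro]: "a \<in> Obj C \<Longrightarrow> b \<in> Obj C \<Longrightarrow> pr0 C a b \<in> Hom C (prd C a b) a"
  and pr1_in_hom [intro]: "a \<in> Obj C \<Longrightarrow> b \<in> Obj C \<Longrightarrow> pr1 C a b \<in> Hom C (prd C a b) b"
  using has_finite_products by (auto simp: has_finite_products_def)

lemma
  assumes f: "f \<in> Hom C c a" and g: "g \<in> Hom C c b"
  shows pair_in_hom [intro]: "pair C f g \<in> Hom C c (prd C a b)"
    and pair_pr0: "cmp C (pair C f g) (pr0 C a b) = f"
    and pair_pr1: "cmp C (pair C f g) (pr1 C a b) = g"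
proof -
  have "c \<in> Obj C" "a \<in> Obj C" "b \<in> Obj C"
    using f g dom_obj cod_obj by blast+
  with f g has_finite_products show "pair C f g \<in> Hom C c (prd C a b)"
    "cmp C (pair C f g) (pr0 C a b) = f" "cmp C (pair C f g) (pr1 C a b) = g"
    unfolding has_finite_products_def by blast+
qed

lemma pair_eqI:
  assumes "h \<in> Hom C c (prd C a b)" "h' \<in> Hom C c (prd C a b)" "a \<in> Obj C" "b \<in> Obj C"
    and "cmp C h (pr0 C a b) = cmp C h' (pr0 C a b)" "cmp C h (pr1 C a b) = cmp C h' (pr1 C a b)"
  shows "h = h'"
proof -
  have "\<forall>c \<in> Obj C. \<forall>h \<in> Hom C c (prd C a b). h = pair C (cmp C h (pr0 C a b)) (cmp C h (pr1 C a b))"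
    using has_finite_products assms(3,4) unfolding has_finite_products_def by blast
  moreover have "c \<in> Obj C"
    using assms(1) dom_obj by blast
  ultimately have "h = pair C (cmp C h (pr0 C a b)) (cmp C h (pr1 C a b))"
    and "h' = pair C (cmp C h' (pr0 C a b)) (cmp C h' (pr1 C a b))"
    using assms(1,2) by blast+
  with assms(5,6) show ?thesis
    by simp
qed

lemma comp_pair:
  assumes k: "k \<in> Hom C d c" and f: "f \<in> Hom C c a" and g: "g \<in> Hom C c b"
  shows "cmp C k (pair C f g) = pair C (cmp C k f) (cmp C k g)"
proof -
  have a: "a \<in> Obj C" and b: "b \<in> Obj C"
    using f g cod_obj by blast+
  have kf: "cmp C k f \<in> Hom C d a" and kg: "cmp C k g \<in> Hom C d b"
    using k f g by blast+
  show ?thesis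
  proof (rule pair_eqI[OF _ _ a b])
    show "cmp C (cmp C k (pair C f g)) (pr0 C a b) = cmp C (pair C (cmp C k f) (cmp C k g)) (pr0 C a b)"
      by (simp add: comp_assoc[OF k pair_in_hom[OF f g] pr0_in_hom[OF a b]] pair_pr0[OF f g] pair_pr0[OF kf kg])
    show "cmp C (cmp C k (pair C f g)) (pr1 C a b) = cmp C (pair C (cmp C k f) (cmp C k g)) (pr1 C a b)"
      by (simp add: comp_assoc[OF k pair_in_hom[OF f g] pr1_in_hom[OF a b]] pair_pr1[OF f g] pair_pr1[OF kf kg])
  qed (use k f g kf kg in auto)
qed

subsection \<open>The functor P\<close>

lemma Pob_obj [intro]: "a \<in> Obj C \<Longrightarrow> Pob C a \<in> Obj C"
  by (simp add: Pob_def prd_obj)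

lemma funpow_Pob_obj [intro]: "a \<in> Obj C \<Longrightarrow> (Pob C ^^ n) a \<in> Obj C"
  by (induction n) auto

lemma funpow_Pob_Pob [simp]: "(Pob C ^^ n) (Pob C a) = Pob C ((Pob C ^^ n) a)"
  by (simp add: funpow_swap1)

lemma funpow_Parr_Parr [simp]: "(Parr C ^^ n) (Parr C f) = Parr C ((Parr C ^^ n) f)"
  by (simp add: funpow_swap1)

lemma pr0_in_hom_Pob [intro]: "a \<in> Obj C \<Longrightarrow> pr0 C a a \<in> Hom C (Pob C a) a"
  and pr1_in_hom_Pob [intro]: "a \<in> Obj C \<Longrightarrow> pr1 C a a \<in> Hom C (Pob C a) a"
  by (auto simp: Pob_def)

lemma
  assumes f: "f \<in> Hom C a b"
  shows Parr_in_hom [intro]: "Parr C f \<in> Hom C (Pob C a) (Pob C b)"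
    and Parr_pr0: "cmp C (Parr C f) (pr0 C b b) = cmp C (pr0 C a a) f"
    and Parr_pr1: "cmp C (Parr C f) (pr1 C b b) = cmp C (pr1 C a a) f"
proof -
  have "a \<in> Obj C"
    using f dom_obj by blast
  then have "cmp C (pr0 C a a) f \<in> Hom C (Pob C a) b" "cmp C (pr1 C a a) f \<in> Hom C (Pob C a) b"
    using f by blast+
  moreover have "dom C f = a"
    using f by (simp add: Hom_def)
  ultimately show "Parr C f \<in> Hom C (Pob C a) (Pob C b)"
    "cmp C (Parr C f) (pr0 C b b) = cmp C (pr0 C a a) f"
    "cmp C (Parr C f) (pr1 C b b) = cmp C (pr1 C a a) f"
    unfolding Parr_def Pob_def by (simp_all add: pair_in_hom pair_pr0 pair_pr1)
qed

lemma pair_comp_Parr: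
  assumes f: "f \<in> Hom C c a" and g: "g \<in> Hom C c a" and h: "h \<in> Hom C a b"
  shows "cmp C (pair C f g) (Parr C h) = pair C (cmp C f h) (cmp C g h)"
proof -
  have a: "a \<in> Obj C"
    using h dom_obj by blast
  have fg: "pair C f g \<in> Hom C c (prd C a a)"
    using f g by blast
  have "Parr C h = pair C (cmp C (pr0 C a a) h) (cmp C (pr1 C a a) h)"
    using h by (simp add: Parr_def Hom_def)
  also have "cmp C (pair C f g) \<dots>
      = pair C (cmp C (pair C f g) (cmp C (pr0 C a a) h)) (cmp C (pair C f g) (cmp C (pr1 C a a) h))"
    using a h by (intro comp_pair[OF fg]) auto
  also have "\<dots> = pair C (cmp C f h) (cmp C g h)"
    using comp_assoc[OF fg pr0_in_hom[OF a a] h] comp_assoc[OF fg pr1_in_hom[OF a a] h]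
    by (simp add: pair_pr0[OF f g] pair_pr1[OF f g])
  finally show ?thesis .
qed

lemma Parr_comp:
  assumes f: "f \<in> Hom C a b" and g: "g \<in> Hom C b c"
  shows "Parr C (cmp C f g) = cmp C (Parr C f) (Parr C g)"
proof -
  have a: "a \<in> Obj C"
    using f dom_obj by blast
  have "Parr C f = pair C (cmp C (pr0 C a a) f) (cmp C (pr1 C a a) f)"
    using f by (simp add: Parr_def Hom_def)
  then have "cmp C (Parr C f) (Parr C g) = pair C (cmp C (cmp C (pr0 C a a) f) g) (cmp C (cmp C (pr1 C a a) f) g)"
    using pair_comp_Parr[OF comp_in_hom[OF pr0_in_hom[OF a a] f] comp_in_hom[OF pr1_in_hom[OF a a] f] g]
    by simp
  also have "\<dots> = Parr C (cmp C f g)"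
    using comp_in_hom[OF f g]
    by (simp add: Parr_def Hom_def comp_assoc[OF pr0_in_hom[OF a a] f g] comp_assoc[OF pr1_in_hom[OF a a] f g])
  finally show ?thesis by simp
qed

lemma funpow_Parr_in_hom [intro]:
  "f \<in> Hom C a b \<Longrightarrow> (Parr C ^^ n) f \<in> Hom C ((Pob C ^^ n) a) ((Pob C ^^ n) b)"
  by (induction n) auto

lemma funpow_Parr_comp:
  "f \<in> Hom C a b \<Longrightarrow> g \<in> Hom C b c \<Longrightarrow>
   (Parr C ^^ n) (cmp C f g) = cmp C ((Parr C ^^ n) f) ((Parr C ^^ n) g)"
proof (induction n)
  case (Suc n)
  then show ?case
    using Parr_comp[OF funpow_Parr_in_hom[OF Suc.prems(1)] funpow_Parr_in_hom[OF Suc.prems(2)]] by simp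
qed simp

lemma funpow_Parr_pr0_in_hom [intro]:
  "a \<in> Obj C \<Longrightarrow> (Parr C ^^ n) (pr0 C a a) \<in> Hom C (Pob C ((Pob C ^^ n) a)) ((Pob C ^^ n) a)"
  using funpow_Parr_in_hom[OF pr0_in_hom_Pob] by simp

subsection \<open>The tangent of a pre-D-sequence\<close>

lemma preD_seqD: "preD_seq C a b f \<Longrightarrow> f n \<in> Hom C ((Pob C ^^ n) a) b"
  by (simp add: preD_seq_def)

lemma preD_seqD_Suc: "preD_seq C a b f \<Longrightarrow> f (Suc n) \<in> Hom C (Pob C ((Pob C ^^ n) a)) b"
  using preD_seqD[of a b f "Suc n"] by simp

lemma preD_seq_dom_obj: "preD_seq C a b f \<Longrightarrow> a \<in> Obj C"
  and preD_seq_cod_obj: "preD_seq C a b f \<Longrightarrow> b \<in> Obj C"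
  using preD_seqD[of a b f 0] dom_obj cod_obj by auto

lemma
  assumes f: "preD_seq C a b f"
  shows Tan_in_hom: "Tan C a f n \<in> Hom C (Pob C ((Pob C ^^ n) a)) (Pob C b)"
    and Tan_pr0: "cmp C (Tan C a f n) (pr0 C b b) = cmp C ((Parr C ^^ n) (pr0 C a a)) (f n)"
    and Tan_pr1: "cmp C (Tan C a f n) (pr1 C b b) = f (Suc n)"
proof -
  have "cmp C ((Parr C ^^ n) (pr0 C a a)) (f n) \<in> Hom C (Pob C ((Pob C ^^ n) a)) b"
    using f preD_seq_dom_obj preD_seqD by blast
  with preD_seqD_Suc[OF f] show "Tan C a f n \<in> Hom C (Pob C ((Pob C ^^ n) a)) (Pob C b)"
    "cmp C (Tan C a f n) (pr0 C b b) = cmp C ((Parr C ^^ n) (pr0 C a a)) (f n)"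
    "cmp C (Tan C a f n) (pr1 C b b) = f (Suc n)"
    unfolding Tan_def Pob_def[of C b] by (simp_all add: pair_in_hom pair_pr0 pair_pr1)
qed

lemma preD_seq_Tan: "preD_seq C a b f \<Longrightarrow> preD_seq C (Pob C a) (Pob C b) (Tan C a f)"
  using Tan_in_hom by (simp add: preD_seq_def)

lemma preD_seq_Tan_iter:
  "preD_seq C a b f \<Longrightarrow> preD_seq C ((Pob C ^^ n) a) ((Pob C ^^ n) b) (Tan_iter C n a f)"
  by (induction n) (auto intro: preD_seq_Tan)

lemma Tan_iter_at_0_in_hom:
  "preD_seq C a b f \<Longrightarrow> Tan_iter C n a f 0 \<in> Hom C ((Pob C ^^ n) a) ((Pob C ^^ n) b)"
  using preD_seqD[OF preD_seq_Tan_iter, of a b f n 0] by simp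

lemma Tan_iter_Suc_right: "Tan_iter C (Suc n) a f = Tan_iter C n (Pob C a) (Tan C a f)"
  by (induction n) simp_all

end

definition precomp_seq :: "('o, 'a, 'z) cartcat_scheme \<Rightarrow> 'a \<Rightarrow> (nat \<Rightarrow> 'a) \<Rightarrow> (nat \<Rightarrow> 'a)" where
  "precomp_seq C u f = (\<lambda>n. cmp C ((Parr C ^^ n) u) (f n))"

definition postcomp_seq :: "('o, 'a, 'z) cartcat_scheme \<Rightarrow> (nat \<Rightarrow> 'a) \<Rightarrow> 'a \<Rightarrow> (nat \<Rightarrow> 'a)" where
  "postcomp_seq C f v = (\<lambda>n. cmp C (f n) v)"

context cartesian_cat
begin

lemma Tan_precomp_seq:
  assumes u: "u \<in> Hom C a' a" and f: "preD_seq C a b f"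
  shows "Tan C a' (precomp_seq C u f) = precomp_seq C (Parr C u) (Tan C a f)"
proof
  fix n
  have a: "a \<in> Obj C" and a': "a' \<in> Obj C"
    using f u preD_seq_dom_obj dom_obj by blast+
  have fn: "f n \<in> Hom C ((Pob C ^^ n) a) b"
    using f by (rule preD_seqD)
  have un: "(Parr C ^^ n) u \<in> Hom C ((Pob C ^^ n) a') ((Pob C ^^ n) a)"
    using u by blast
  have Pun: "(Parr C ^^ n) (Parr C u) \<in> Hom C (Pob C ((Pob C ^^ n) a')) (Pob C ((Pob C ^^ n) a))"
    using un by auto
  have "cmp C ((Parr C ^^ n) (pr0 C a' a')) ((Parr C ^^ n) u) = (Parr C ^^ n) (cmp C (pr0 C a' a') u)"
    using funpow_Parr_comp[OF pr0_in_hom_Pob[OF a'] u] by simp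
  also have "\<dots> = (Parr C ^^ n) (cmp C (Parr C u) (pr0 C a a))"
    using Parr_pr0[OF u] by simp
  also have "\<dots> = cmp C ((Parr C ^^ n) (Parr C u)) ((Parr C ^^ n) (pr0 C a a))"
    using funpow_Parr_comp[OF Parr_in_hom[OF u] pr0_in_hom_Pob[OF a]] by simp
  finally have "cmp C ((Parr C ^^ n) (pr0 C a' a')) (cmp C ((Parr C ^^ n) u) (f n))
      = cmp C ((Parr C ^^ n) (Parr C u)) (cmp C ((Parr C ^^ n) (pr0 C a a)) (f n))"
    using comp_assoc[OF funpow_Parr_pr0_in_hom[OF a'] un fn]
      comp_assoc[OF Pun funpow_Parr_pr0_in_hom[OF a] fn] by simp
  moreover have "cmp C ((Parr C ^^ n) (Parr C u)) (Tan C a f n)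
      = pair C (cmp C ((Parr C ^^ n) (Parr C u)) (cmp C ((Parr C ^^ n) (pr0 C a a)) (f n)))
          (cmp C ((Parr C ^^ n) (Parr C u)) (f (Suc n)))"
    unfolding Tan_def
    using comp_pair[OF Pun comp_in_hom[OF funpow_Parr_pr0_in_hom[OF a] fn] preD_seqD_Suc[OF f]] .
  ultimately show "Tan C a' (precomp_seq C u f) n = precomp_seq C (Parr C u) (Tan C a f) n"
    by (simp add: precomp_seq_def Tan_def)
qed

lemma Tan_postcomp_seq:
  assumes v: "v \<in> Hom C b b'" and f: "preD_seq C a b f"
  shows "Tan C a (postcomp_seq C f v) = postcomp_seq C (Tan C a f) (Parr C v)"
proof
  fix n
  have a: "a \<in> Obj C"
    using f by (rule preD_seq_dom_obj)
  have fn: "f n \<in> Hom C ((Pob C ^^ n) a) b"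
    using f by (rule preD_seqD)
  show "Tan C a (postcomp_seq C f v) n = postcomp_seq C (Tan C a f) (Parr C v) n"
    using pair_comp_Parr[OF comp_in_hom[OF funpow_Parr_pr0_in_hom[OF a] fn] preD_seqD_Suc[OF f] v]
      comp_assoc[OF funpow_Parr_pr0_in_hom[OF a] fn v]
    by (simp add: postcomp_seq_def Tan_def)
qed

lemma Tan_iter_precomp_seq:
  "u \<in> Hom C a' a \<Longrightarrow> preD_seq C a b f \<Longrightarrow>
   Tan_iter C n a' (precomp_seq C u f) = precomp_seq C ((Parr C ^^ n) u) (Tan_iter C n a f)"
proof (induction n)
  case (Suc n)
  then show ?case
    using Tan_precomp_seq[OF funpow_Parr_in_hom[OF Suc.prems(1)] preD_seq_Tan_iter[OF Suc.prems(2)]] by simp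
qed simp

lemma Tan_iter_postcomp_seq:
  "v \<in> Hom C b b' \<Longrightarrow> preD_seq C a b f \<Longrightarrow>
   Tan_iter C n a (postcomp_seq C f v) = postcomp_seq C (Tan_iter C n a f) ((Parr C ^^ n) v)"
proof (induction n)
  case (Suc n)
  then show ?case
    using Tan_postcomp_seq[OF funpow_Parr_in_hom[OF Suc.prems(1)] preD_seq_Tan_iter[OF Suc.prems(2)]] by simp
qed simp

lemma Tan_iter_Suc_pr0:
  assumes f: "preD_seq C a b f"
  shows "cmp C (Tan_iter C (Suc n) a f 0) ((Parr C ^^ n) (pr0 C b b))
       = cmp C ((Parr C ^^ n) (pr0 C a a)) (Tan_iter C n a f 0)"
proof -
  have a: "a \<in> Obj C" and b: "b \<in> Obj C"
    using f preD_seq_dom_obj preD_seq_cod_obj by blast+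
  have "postcomp_seq C (Tan C a f) (pr0 C b b) = precomp_seq C (pr0 C a a) f"
    using Tan_pr0[OF f] by (simp add: postcomp_seq_def precomp_seq_def)
  then have "postcomp_seq C (Tan_iter C n (Pob C a) (Tan C a f)) ((Parr C ^^ n) (pr0 C b b))
      = precomp_seq C ((Parr C ^^ n) (pr0 C a a)) (Tan_iter C n a f)"
    using Tan_iter_postcomp_seq[OF pr0_in_hom_Pob[OF b] preD_seq_Tan[OF f]]
      Tan_iter_precomp_seq[OF pr0_in_hom_Pob[OF a] f] by simp
  then show ?thesis
    unfolding Tan_iter_Suc_right by (simp add: postcomp_seq_def precomp_seq_def fun_eq_iff)
qed

subsection \<open>Associativity of composition\<close>

lemma preD_seq_Dcomp: "preD_seq C a b f \<Longrightarrow> preD_seq C b c g \<Longrightarrow> preD_seq C a c (Dcomp C a f g)"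
  unfolding preD_seq_def[of C a c] Dcomp_def using Tan_iter_at_0_in_hom preD_seqD by blast

lemma Tan_Dcomp:
  assumes f: "preD_seq C a b f" and g: "preD_seq C b c g"
  shows "Tan C a (Dcomp C a f g) = Dcomp C (Pob C a) (Tan C a f) (Tan C b g)"
proof
  fix n
  have a: "a \<in> Obj C" and b: "b \<in> Obj C"
    using f preD_seq_dom_obj preD_seq_cod_obj by blast+
  have gn: "g n \<in> Hom C ((Pob C ^^ n) b) c"
    using g by (rule preD_seqD)
  have Tn: "Tan_iter C n a f 0 \<in> Hom C ((Pob C ^^ n) a) ((Pob C ^^ n) b)"
    and TSn: "Tan_iter C (Suc n) a f 0 \<in> Hom C (Pob C ((Pob C ^^ n) a)) (Pob C ((Pob C ^^ n) b))"
    using Tan_iter_at_0_in_hom[OF f, of n] Tan_iter_at_0_in_hom[OF f, of "Suc n"] by simp_all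
  have "cmp C ((Parr C ^^ n) (pr0 C a a)) (cmp C (Tan_iter C n a f 0) (g n))
      = cmp C (Tan_iter C (Suc n) a f 0) (cmp C ((Parr C ^^ n) (pr0 C b b)) (g n))"
    using comp_assoc[OF funpow_Parr_pr0_in_hom[OF a] Tn gn]
      comp_assoc[OF TSn funpow_Parr_pr0_in_hom[OF b] gn] Tan_iter_Suc_pr0[OF f, of n] by simp
  moreover have "Dcomp C (Pob C a) (Tan C a f) (Tan C b g) n
      = cmp C (Tan_iter C (Suc n) a f 0) (pair C (cmp C ((Parr C ^^ n) (pr0 C b b)) (g n)) (g (Suc n)))"
    unfolding Dcomp_def Tan_iter_Suc_right[symmetric] by (simp add: Tan_def)
  moreover have "\<dots> = pair C (cmp C (Tan_iter C (Suc n) a f 0) (cmp C ((Parr C ^^ n) (pr0 C b b)) (g n)))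
      (cmp C (Tan_iter C (Suc n) a f 0) (g (Suc n)))"
    using comp_pair[OF TSn comp_in_hom[OF funpow_Parr_pr0_in_hom[OF b] gn] preD_seqD_Suc[OF g]] .
  ultimately show "Tan C a (Dcomp C a f g) n = Dcomp C (Pob C a) (Tan C a f) (Tan C b g) n"
    by (simp add: Tan_def Dcomp_def)
qed

lemma Tan_iter_Dcomp:
  "preD_seq C a b f \<Longrightarrow> preD_seq C b c g \<Longrightarrow>
   Tan_iter C n a (Dcomp C a f g) = Dcomp C ((Pob C ^^ n) a) (Tan_iter C n a f) (Tan_iter C n b g)"
proof (induction n)
  case (Suc n)
  then show ?case
    using Tan_Dcomp[OF preD_seq_Tan_iter[OF Suc.prems(1)] preD_seq_Tan_iter[OF Suc.prems(2)]] by simp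
qed simp

lemma Dcomp_assoc:
  assumes f: "preD_seq C a b f" and g: "preD_seq C b c g" and h: "preD_seq C c d h"
  shows "Dcomp C a (Dcomp C a f g) h = Dcomp C a f (Dcomp C b g h)"
proof
  fix n
  have "Dcomp C a (Dcomp C a f g) h n = cmp C (cmp C (Tan_iter C n a f 0) (Tan_iter C n b g 0)) (h n)"
    unfolding Dcomp_def[of C a "Dcomp C a f g"] Tan_iter_Dcomp[OF f g] by (simp add: Dcomp_def)
  also have "\<dots> = cmp C (Tan_iter C n a f 0) (cmp C (Tan_iter C n b g 0) (h n))"
    using comp_assoc[OF Tan_iter_at_0_in_hom[OF f] Tan_iter_at_0_in_hom[OF g] preD_seqD[OF h]] .
  also have "\<dots> = Dcomp C a f (Dcomp C b g h) n"
    by (simp add: Dcomp_def)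
  finally show "Dcomp C a (Dcomp C a f g) h n = Dcomp C a f (Dcomp C b g h) n" .
qed

subsection \<open>The identity pre-D-sequence\<close>

lemma Did_Suc:
  "a \<in> Obj C \<Longrightarrow> Did C a (Suc n) = cmp C (pr1 C ((Pob C ^^ n) a) ((Pob C ^^ n) a)) (Did C a n)"
  by (cases n) (simp_all add: comp_idn_right[OF pr1_in_hom_Pob])

lemma Did_in_hom: "a \<in> Obj C \<Longrightarrow> Did C a n \<in> Hom C ((Pob C ^^ n) a) a"
proof (induction n)
  case (Suc n)
  then show ?case
    using Did_Suc comp_in_hom[OF pr1_in_hom_Pob[OF funpow_Pob_obj]] by simp
qed auto

lemma preD_seq_Did: "a \<in> Obj C \<Longrightarrow> preD_seq C a a (Did C a)"
  by (simp add: preD_seq_def Did_in_hom)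

lemma Did_natural:
  assumes u: "u \<in> Hom C a b"
  shows "cmp C (Did C a n) u = cmp C ((Parr C ^^ n) u) (Did C b n)"
proof (induction n)
  case 0
  show ?case
    using u by (simp add: comp_idn_left comp_idn_right)
next
  case (Suc n)
  have a: "a \<in> Obj C" and b: "b \<in> Obj C"
    using u dom_obj cod_obj by blast+
  have un: "(Parr C ^^ n) u \<in> Hom C ((Pob C ^^ n) a) ((Pob C ^^ n) b)"
    using u by blast
  note pr1a = pr1_in_hom_Pob[OF funpow_Pob_obj[OF a, of n]]
  note pr1b = pr1_in_hom_Pob[OF funpow_Pob_obj[OF b, of n]]
  have "cmp C (Did C a (Suc n)) u = cmp C (pr1 C ((Pob C ^^ n) a) ((Pob C ^^ n) a)) (cmp C (Did C a n) u)"
    using Did_Suc[OF a] comp_assoc[OF pr1a Did_in_hom[OF a] u] by simp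
  also have "\<dots> = cmp C (cmp C (pr1 C ((Pob C ^^ n) a) ((Pob C ^^ n) a)) ((Parr C ^^ n) u)) (Did C b n)"
    using Suc comp_assoc[OF pr1a un Did_in_hom[OF b]] by simp
  also have "\<dots> = cmp C (cmp C (Parr C ((Parr C ^^ n) u)) (pr1 C ((Pob C ^^ n) b) ((Pob C ^^ n) b))) (Did C b n)"
    using Parr_pr1[OF un] by simp
  also have "\<dots> = cmp C ((Parr C ^^ Suc n) u) (Did C b (Suc n))"
    using comp_assoc[OF Parr_in_hom[OF un] pr1b Did_in_hom[OF b]] Did_Suc[OF b] by simp
  finally show ?case .
qed

lemma Did_Suc_Pob: "a \<in> Obj C \<Longrightarrow> Did C a (Suc n) = cmp C (Did C (Pob C a) n) (pr1 C a a)"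
proof (induction n)
  case 0
  then show ?case
    using comp_idn_left[OF pr1_in_hom_Pob] by simp
next
  case (Suc n)
  note a = Suc.prems
  note pr1 = pr1_in_hom_Pob[OF funpow_Pob_obj[OF Pob_obj[OF a], of n]]
  have "Did C a (Suc (Suc n))
      = cmp C (pr1 C (Pob C ((Pob C ^^ n) a)) (Pob C ((Pob C ^^ n) a))) (cmp C (Did C (Pob C a) n) (pr1 C a a))"
    using Did_Suc[OF a, of "Suc n"] Suc by simp
  also have "\<dots> = cmp C (Did C (Pob C a) (Suc n)) (pr1 C a a)"
    using comp_assoc[OF pr1 Did_in_hom[OF Pob_obj[OF a]] pr1_in_hom_Pob[OF a]] Did_Suc[OF Pob_obj[OF a], of n]
    by simp
  finally show ?case .
qed

lemma Tan_Did: "a \<in> Obj C \<Longrightarrow> Tan C a (Did C a) = Did C (Pob C a)"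
proof
  fix n
  assume a: "a \<in> Obj C"
  show "Tan C a (Did C a) n = Did C (Pob C a) n"
  proof (rule pair_eqI[OF _ _ a a])
    show "Tan C a (Did C a) n \<in> Hom C (Pob C ((Pob C ^^ n) a)) (prd C a a)"
      using Tan_in_hom[OF preD_seq_Did[OF a]] by (simp add: Pob_def)
    have "Did C (Pob C a) n \<in> Hom C (Pob C ((Pob C ^^ n) a)) (Pob C a)"
      using Did_in_hom[OF Pob_obj[OF a], of n] by simp
    then show "Did C (Pob C a) n \<in> Hom C (Pob C ((Pob C ^^ n) a)) (prd C a a)"
      by (simp only: Pob_def[of C a])
    show "cmp C (Tan C a (Did C a) n) (pr0 C a a) = cmp C (Did C (Pob C a) n) (pr0 C a a)"
      using Tan_pr0[OF preD_seq_Did[OF a]] Did_natural[OF pr0_in_hom_Pob[OF a]] by simp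
    show "cmp C (Tan C a (Did C a) n) (pr1 C a a) = cmp C (Did C (Pob C a) n) (pr1 C a a)"
      using Tan_pr1[OF preD_seq_Did[OF a]] Did_Suc_Pob[OF a] by simp
  qed
qed

lemma Tan_iter_Did: "a \<in> Obj C \<Longrightarrow> Tan_iter C n a (Did C a) = Did C ((Pob C ^^ n) a)"
  by (induction n) (simp_all add: Tan_Did funpow_Pob_obj)

lemma Dcomp_Did_left: "preD_seq C a b f \<Longrightarrow> Dcomp C a (Did C a) f = f"
  using comp_idn_left[OF preD_seqD]
  by (simp add: fun_eq_iff Dcomp_def Tan_iter_Did preD_seq_dom_obj)

lemma Tan_iter_comp_Did:
  "preD_seq C a b f \<Longrightarrow> cmp C (Tan_iter C k a f j) (Did C b k) = f (j + k)"
proof (induction k arbitrary: j)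
  case 0
  then show ?case
    using comp_idn_right[OF preD_seqD] by simp
next
  case (Suc k)
  note f = Suc.prems
  have b: "b \<in> Obj C"
    using f by (rule preD_seq_cod_obj)
  note Tk = preD_seq_Tan_iter[OF f, of k]
  have "cmp C (Tan_iter C (Suc k) a f j) (Did C b (Suc k))
      = cmp C (cmp C (Tan C ((Pob C ^^ k) a) (Tan_iter C k a f) j) (pr1 C ((Pob C ^^ k) b) ((Pob C ^^ k) b)))
          (Did C b k)"
    using Did_Suc[OF b] comp_assoc[OF Tan_in_hom[OF Tk] pr1_in_hom_Pob[OF funpow_Pob_obj[OF b]] Did_in_hom[OF b]]
    by simp
  also have "\<dots> = f (j + Suc k)"
    using Tan_pr1[OF Tk] Suc.IH[OF f, of "Suc j"] by simp
  finally show ?case .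
qed

lemma Dcomp_Did_right: "preD_seq C a b f \<Longrightarrow> Dcomp C a f (Did C b) = f"
  using Tan_iter_comp_Did[of a b f _ 0] by (simp add: Dcomp_def)

end

theorem proposition3p7:
  fixes C :: "('o, 'a, 'z) cartcat_scheme"
  assumes "cartesian_category C"
  shows "(\<forall>a b c f g. a \<in> Obj C \<longrightarrow> b \<in> Obj C \<longrightarrow> c \<in> Obj C \<longrightarrow>
            preD_seq C a b f \<longrightarrow> preD_seq C b c g \<longrightarrow> preD_seq C a c (Dcomp C a f g))
       \<and> (\<forall>a. a \<in> Obj C \<longrightarrow> preD_seq C a a (Did C a))
       \<and> (\<forall>a b c d f g h. a \<in> Obj C \<longrightarrow> b \<in> Obj C \<longrightarrow> c \<in> Obj C \<longrightarrow> d \<in> Obj C \<longrightarrow>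
            preD_seq C a b f \<longrightarrow> preD_seq C b c g \<longrightarrow> preD_seq C c d h \<longrightarrow>
            Dcomp C a (Dcomp C a f g) h = Dcomp C a f (Dcomp C b g h))
       \<and> (\<forall>a b f. a \<in> Obj C \<longrightarrow> b \<in> Obj C \<longrightarrow> preD_seq C a b f \<longrightarrow>
            Dcomp C a (Did C a) f = f \<and> Dcomp C a f (Did C b) = f)"
proof -
  interpret cartesian_cat C
    using assms by unfold_locales
  show ?thesis
    by (blast intro: preD_seq_Dcomp preD_seq_Did Dcomp_assoc Dcomp_Did_left Dcomp_Did_right)
qed

end
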